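(* For the $2$-server problem on the line and any parameter $\lambda\in[0,1]$, the algorithm LambdaDC satisfies, for every instance $I$ and every prediction with prediction error $\eta$, \[ \mathrm{LambdaDC}(I)\le \min\left\{(1+\lambda)\left(1+\frac{\eta}{\mathrm{OPT}(I)}\right),\ 1+\frac1\lambda\right\}\mathrm{OPT}(I)+c, \] with $c\ge0$ depending only on the initial configuration (where $1/\lambda=\infty$ for $\lambda=0$). Thus it is $(1+\lambda)$-consistent and $(1+1/\lambda)$-robust.
   Context: The $k$-server problem on the line (here $k=2$): servers on $\mathbb{R}$ labeled $s_1\le s_2$, requests $r_t\in\mathbb{R}$ revealed online, each served by moving a server to it; cost = total distance moved; $\mathrm{OPT}$ is the optimal offline cost. A prediction gives for each request $r_t$ an index $p_t\in\{1,2\}$; FtP serves each request with the predicted server (relabeling by position), and $\eta=\mathrm{FtP}(I)-\mathrm{OPT}(I)$. $\alpha$-consistent: cost $\le\alpha\,\mathrm{OPT}+c$ whenever $\eta=0$; $\beta$-robust: cost $\le\beta\,\mathrm{OPT}+c$ for all predictions. LambdaDC: if $r_t<s_1$ or $r_t>s_k$, move only the closest server; if $s_i<r_t<s_{i+1}$ and $p_t\le i$, move $s_i$ at speed $1$ and $s_{i+1}$ at speed $\lambda$ towards $r_t$ until one reaches it; if $p_t\ge i+1$, the speeds are swapped. *)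

theory Defs
  imports Complex_Main
begin

text \<open>Configurations of the two servers are pairs (s1, s2) of reals; for the online
algorithms we keep the invariant s1 \<le> s2 (labelling by position).
Predictions are natural numbers in {1,2}.\<close>

definition ftp_step :: "real \<times> real \<Rightarrow> real \<Rightarrow> nat \<Rightarrow> (real \<times> real) \<times> real" where
  "ftp_step s r p =
     (let (s1, s2) = s in
      if p = 1 then ((min r s2, max r s2), \<bar>s1 - r\<bar>)
      else ((min s1 r, max s1 r), \<bar>s2 - r\<bar>))"

fun ftp_cost :: "real \<times> real \<Rightarrow> real list \<Rightarrow> nat list \<Rightarrow> real" where
  "ftp_cost s (r # rs) (p # ps) =
     (let (s', c) = ftp_step s r p in c + ftp_cost s' rs ps)"
| "ftp_cost s _ _ = 0"

text \<open>One step of LambdaDC with parameter lam (the continuous movement is resolved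
in closed form). Returns new configuration and cost.\<close>
definition ldc_step :: "real \<Rightarrow> real \<times> real \<Rightarrow> real \<Rightarrow> nat \<Rightarrow> (real \<times> real) \<times> real" where
  "ldc_step lam s r p =
     (let (s1, s2) = s; d1 = r - s1; d2 = s2 - r in
      if r \<le> s1 then ((r, s2), s1 - r)
      else if s2 \<le> r then ((s1, r), r - s2)
      else if p \<le> 1 then
        (if lam * d1 \<le> d2 then ((r, s2 - lam * d1), (1 + lam) * d1)
         else ((s1 + d2 / lam, r), d2 + d2 / lam))
      else
        (if lam * d2 \<le> d1 then ((s1 + lam * d2, r), (1 + lam) * d2)
         else ((r, s2 - d1 / lam), d1 + d1 / lam)))"

fun ldc_cost :: "real \<Rightarrow> real \<times> real \<Rightarrow> real list \<Rightarrow> nat list \<Rightarrow> real" where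
  "ldc_cost lam s (r # rs) (p # ps) =
     (let (s', c) = ldc_step lam s r p in c + ldc_cost lam s' rs ps)"
| "ldc_cost lam s _ _ = 0"

fun move_cost :: "real \<times> real \<Rightarrow> (real \<times> real) list \<Rightarrow> real" where
  "move_cost s [] = 0"
| "move_cost (a, b) ((c, d) # xs) = \<bar>a - c\<bar> + \<bar>b - d\<bar> + move_cost (c, d) xs"

definition serves :: "real list \<Rightarrow> (real \<times> real) list \<Rightarrow> bool" where
  "serves rs xs \<longleftrightarrow> length xs = length rs \<and>
     (\<forall>i < length rs. rs ! i = fst (xs ! i) \<or> rs ! i = snd (xs ! i))"

definition opt_cost :: "real \<times> real \<Rightarrow> real list \<Rightarrow> real" where
  "opt_cost s rs = Inf {move_cost s xs | xs. serves rs xs}"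

end

theory Submission
  imports Defs
begin

(* Two potential-function arguments in the style of Double Coverage, with configurations
   compared by the min-cost matching distance M.
   Against Follow-the-Prediction in configuration F, the potential (1 + lam) M(A, F) + lam (a2 - a1)
   of LambdaDC's configuration A pays for every LambdaDC step up to (1 + lam) times FtP's cost of
   the same step; for a request between the two servers this works because the server LambdaDC
   moves at full speed is the predicted one, i.e. the one FtP moves to the request.
   Against an offline schedule in configuration X, the potential (1 + lam) M(A, X) + (a2 - a1) pays
   for lam times every LambdaDC step, and an offline move raises it by at most (1 + lam) times its
   cost.
   Since M(S, S) = 0, the potentials start at lam (s2 - s1) and s2 - s1, which gives the additive
   constant. *)

definition matching_dist :: "real \<times> real \<Rightarrow> real \<times> real \<Rightarrow> real" where
  "matching_dist a b =
     min (\<bar>fst a - fst b\<bar> + \<bar>snd a - snd b\<bar>) (\<bar>fst a - snd b\<bar> + \<bar>snd a - fst b\<bar>)"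

lemma matching_dist_nonneg: "matching_dist a b \<ge> 0"
  unfolding matching_dist_def by simp

lemma matching_dist_self: "matching_dist a a = 0"
  unfolding matching_dist_def by (simp add: min_def)

lemma matching_dist_move_le:
  "matching_dist a (c, d) \<le> matching_dist a (x, y) + \<bar>x - c\<bar> + \<bar>y - d\<bar>"
  unfolding matching_dist_def by (auto simp: min_def abs_if)

lemma matching_dist_approach_left:
  "\<lbrakk>r \<le> a1; a1 \<le> a2; r = x \<or> r = y\<rbrakk> \<Longrightarrow>
   matching_dist (r, a2) (x, y) \<le> matching_dist (a1, a2) (x, y) - (a1 - r)"
  unfolding matching_dist_def by (auto simp: min_def abs_if)

lemma matching_dist_approach_right:
  "\<lbrakk>a1 \<le> a2; a2 \<le> r; r = x \<or> r = y\<rbrakk> \<Longrightarrow>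
   matching_dist (a1, r) (x, y) \<le> matching_dist (a1, a2) (x, y) - (r - a2)"
  unfolding matching_dist_def by (auto simp: min_def abs_if)

lemma matching_dist_converge:
  "\<lbrakk>0 \<le> u1; 0 \<le> u2; a1 + u1 \<le> r; r \<le> a2 - u2; r = x \<or> r = y\<rbrakk> \<Longrightarrow>
   matching_dist (a1 + u1, a2 - u2) (x, y) \<le> matching_dist (a1, a2) (x, y) + \<bar>u1 - u2\<bar>"
  unfolding matching_dist_def by (auto simp: min_def abs_if)

lemma ftp_step_sorted: "ftp_step f r p = ((g1, g2), cf) \<Longrightarrow> g1 \<le> g2"
  by (auto simp: ftp_step_def split: prod.splits if_splits)

lemma ftp_step_serves: "ftp_step f r p = ((g1, g2), cf) \<Longrightarrow> r = g1 \<or> r = g2"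
  by (auto simp: ftp_step_def min_def max_def split: prod.splits if_splits)

lemma matching_dist_ftp_step:
  "ftp_step (f1, f2) r p = ((g1, g2), cf) \<Longrightarrow>
   matching_dist a (g1, g2) \<le> matching_dist a (f1, f2) + cf"
  unfolding matching_dist_def ftp_step_def by (auto simp: min_def max_def abs_if split: if_splits)

lemma matching_dist_ftp_step_left:
  "\<lbrakk>f1 \<le> f2; ftp_step (f1, f2) r 1 = ((g1, g2), cf);
    0 \<le> u2; u2 \<le> u1; a1 + u1 \<le> r; r \<le> a2 - u2\<rbrakk> \<Longrightarrow>
   matching_dist (a1 + u1, a2 - u2) (g1, g2) \<le> matching_dist (a1, a2) (f1, f2) + cf - (u1 - u2)"
  unfolding matching_dist_def ftp_step_def by (auto simp: min_def max_def abs_if split: if_splits)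

lemma matching_dist_ftp_step_right:
  "\<lbrakk>f1 \<le> f2; ftp_step (f1, f2) r 2 = ((g1, g2), cf);
    0 \<le> u1; u1 \<le> u2; a1 + u1 \<le> r; r \<le> a2 - u2\<rbrakk> \<Longrightarrow>
   matching_dist (a1 + u1, a2 - u2) (g1, g2) \<le> matching_dist (a1, a2) (f1, f2) + cf - (u2 - u1)"
  unfolding matching_dist_def ftp_step_def by (auto simp: min_def max_def abs_if split: if_splits)

lemma ldc_step_inside_cases:
  assumes "0 \<le> lam" "a1 < r" "r < a2" and step: "ldc_step lam (a1, a2) r p = ((b1, b2), c)"
  obtains (inside_left) u where "p \<le> 1" "0 \<le> u" "b1 = a1 + u" "b2 = a2 - lam * u"
      "b1 \<le> r" "r \<le> b2" "c = (1 + lam) * u"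
    | (inside_right) u where "\<not> p \<le> 1" "0 \<le> u" "b1 = a1 + lam * u" "b2 = a2 - u"
      "b1 \<le> r" "r \<le> b2" "c = (1 + lam) * u"
proof -
  define d1 d2 where "d1 = r - a1" and "d2 = a2 - r"
  have "d1 > 0" "d2 > 0" using assms by (auto simp: d1_def d2_def)
  have step': "ldc_step lam (a1, a2) r p =
    (if p \<le> 1 then
      (if lam * d1 \<le> d2 then ((r, a2 - lam * d1), (1 + lam) * d1)
       else ((a1 + d2 / lam, r), d2 + d2 / lam))
    else
      (if lam * d2 \<le> d1 then ((a1 + lam * d2, r), (1 + lam) * d2)
       else ((r, a2 - d1 / lam), d1 + d1 / lam)))"
    using \<open>a1 < r\<close> \<open>r < a2\<close> by (simp add: ldc_step_def Let_def d1_def d2_def)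
  show thesis
  proof (cases "p \<le> 1")
    case p: True
    show thesis
    proof (cases "lam * d1 \<le> d2")
      case True
      with step step' p have "b1 = a1 + d1" "b2 = a2 - lam * d1" "c = (1 + lam) * d1"
        by (auto simp: d1_def)
      with True p \<open>d1 > 0\<close> show thesis
        by (intro inside_left[of d1]) (auto simp: d1_def d2_def)
    next
      case False
      then have "lam > 0" using \<open>d2 > 0\<close> \<open>0 \<le> lam\<close> by (cases "lam = 0") auto
      then have u: "d2 / lam < d1" "lam * (d2 / lam) = d2"
        using False by (simp_all add: field_simps)
      from step step' p False have "b1 = a1 + d2 / lam" "b2 = r" "c = d2 + d2 / lam" by auto
      moreover have "r = a2 - lam * (d2 / lam)" using u by (simp add: d2_def)
      moreover have "d2 + d2 / lam = (1 + lam) * (d2 / lam)"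
        using \<open>lam > 0\<close> by (simp add: field_simps)
      ultimately show thesis using p u \<open>d2 > 0\<close> \<open>lam > 0\<close>
        by (intro inside_left[of "d2 / lam"]) (auto simp: d1_def)
    qed
  next
    case p: False
    show thesis
    proof (cases "lam * d2 \<le> d1")
      case True
      with step step' p have "b1 = a1 + lam * d2" "b2 = a2 - d2" "c = (1 + lam) * d2"
        by (auto simp: d2_def)
      with True p \<open>d2 > 0\<close> show thesis
        by (intro inside_right[of d2]) (auto simp: d1_def d2_def)
    next
      case False
      then have "lam > 0" using \<open>d1 > 0\<close> \<open>0 \<le> lam\<close> by (cases "lam = 0") auto
      then have u: "d1 / lam < d2" "lam * (d1 / lam) = d1"
        using False by (simp_all add: field_simps)
      from step step' p False have "b1 = r" "b2 = a2 - d1 / lam" "c = d1 + d1 / lam" by auto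
      moreover have "r = a1 + lam * (d1 / lam)" using u by (simp add: d1_def)
      moreover have "d1 + d1 / lam = (1 + lam) * (d1 / lam)"
        using \<open>lam > 0\<close> by (simp add: field_simps)
      ultimately show thesis using p u \<open>d1 > 0\<close> \<open>lam > 0\<close>
        by (intro inside_right[of "d1 / lam"]) (auto simp: d2_def)
    qed
  qed
qed

lemma ldc_step_cases:
  assumes "0 \<le> lam" and "a1 \<le> a2" and step: "ldc_step lam (a1, a2) r p = ((b1, b2), c)"
  obtains (left) "r \<le> a1" "b1 = r" "b2 = a2" "c = a1 - r"
    | (right) "a2 \<le> r" "b1 = a1" "b2 = r" "c = r - a2"
    | (inside_left) u where "p \<le> 1" "0 \<le> u" "b1 = a1 + u" "b2 = a2 - lam * u"
        "b1 \<le> r" "r \<le> b2" "c = (1 + lam) * u"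
    | (inside_right) u where "\<not> p \<le> 1" "0 \<le> u" "b1 = a1 + lam * u" "b2 = a2 - u"
        "b1 \<le> r" "r \<le> b2" "c = (1 + lam) * u"
proof -
  consider "r \<le> a1" | "a1 < r" "a2 \<le> r" | "a1 < r" "r < a2" by linarith
  then show thesis
  proof cases
    case 1
    with step have "b1 = r \<and> b2 = a2 \<and> c = a1 - r" by (simp add: ldc_step_def)
    with 1 show thesis by (intro left) auto
  next
    case 2
    with step have "b1 = a1 \<and> b2 = r \<and> c = r - a2" by (simp add: ldc_step_def)
    with 2 show thesis by (intro right) auto
  next
    case 3
    show thesis
      by (rule ldc_step_inside_cases[OF \<open>0 \<le> lam\<close> 3 step]) (fact inside_left inside_right)+
  qed
qed

lemma ldc_step_sorted:
  "\<lbrakk>0 \<le> lam; a1 \<le> a2; ldc_step lam (a1, a2) r p = ((b1, b2), c)\<rbrakk> \<Longrightarrow> b1 \<le> b2"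
  by (erule (2) ldc_step_cases) auto

lemma ldc_step_ftp_potential:
  assumes "0 \<le> lam" "lam \<le> 1" "a1 \<le> a2" "f1 \<le> f2" "p \<in> {1, 2}"
    and L: "ldc_step lam (a1, a2) r p = ((b1, b2), c)"
    and F: "ftp_step (f1, f2) r p = ((g1, g2), cf)"
  shows "c + (1 + lam) * matching_dist (b1, b2) (g1, g2) + lam * (b2 - b1)
    \<le> (1 + lam) * cf + (1 + lam) * matching_dist (a1, a2) (f1, f2) + lam * (a2 - a1)"
proof -
  have r: "r = g1 \<or> r = g2" using F by (rule ftp_step_serves)
  have F': "matching_dist (a1, a2) (g1, g2) \<le> matching_dist (a1, a2) (f1, f2) + cf"
    using F by (rule matching_dist_ftp_step)
  obtain \<delta>
    where drop: "matching_dist (b1, b2) (g1, g2) \<le> matching_dist (a1, a2) (f1, f2) + cf - \<delta>"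
    and cost: "c + lam * (b2 - b1) \<le> (1 + lam) * \<delta> + lam * (a2 - a1)"
    using \<open>0 \<le> lam\<close> \<open>a1 \<le> a2\<close> L
  proof (cases rule: ldc_step_cases)
    case left
    with matching_dist_approach_left[OF _ \<open>a1 \<le> a2\<close> r] F' show thesis
      by (intro that[of "a1 - r"]) (auto simp: algebra_simps)
  next
    case right
    with matching_dist_approach_right[OF \<open>a1 \<le> a2\<close> _ r] F' show thesis
      by (intro that[of "r - a2"]) (auto simp: algebra_simps)
  next
    case (inside_left u)
    then have "p = 1" using \<open>p \<in> {1, 2}\<close> by auto
    have "lam * u \<le> u" using mult_right_mono[OF \<open>lam \<le> 1\<close> \<open>0 \<le> u\<close>] by simp
    with inside_left \<open>0 \<le> lam\<close> \<open>f1 \<le> f2\<close> F \<open>p = 1\<close>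
      matching_dist_ftp_step_left[of f1 f2 r g1 g2 cf "lam * u" u a1 a2]
    show thesis by (intro that[of "u - lam * u"]) (auto simp: algebra_simps)
  next
    case (inside_right u)
    then have "p = 2" using \<open>p \<in> {1, 2}\<close> by auto
    have "lam * u \<le> u" using mult_right_mono[OF \<open>lam \<le> 1\<close> \<open>0 \<le> u\<close>] by simp
    with inside_right \<open>0 \<le> lam\<close> \<open>f1 \<le> f2\<close> F \<open>p = 2\<close>
      matching_dist_ftp_step_right[of f1 f2 r g1 g2 cf "lam * u" u a1 a2]
    show thesis by (intro that[of "u - lam * u"]) (auto simp: algebra_simps)
  qed
  have "(1 + lam) * matching_dist (b1, b2) (g1, g2)
      \<le> (1 + lam) * (matching_dist (a1, a2) (f1, f2) + cf - \<delta>)"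
    using drop \<open>0 \<le> lam\<close> by (intro mult_left_mono) auto
  with cost show ?thesis by (simp add: algebra_simps)
qed

lemma ldc_step_offline_potential:
  assumes "0 \<le> lam" "lam \<le> 1" "a1 \<le> a2" and r: "r = x \<or> r = y"
    and L: "ldc_step lam (a1, a2) r p = ((b1, b2), c)"
  shows "lam * c + (1 + lam) * matching_dist (b1, b2) (x, y) + (b2 - b1)
    \<le> (1 + lam) * matching_dist (a1, a2) (x, y) + (a2 - a1)"
proof -
  obtain \<delta> where drop: "matching_dist (b1, b2) (x, y) \<le> matching_dist (a1, a2) (x, y) - \<delta>"
    and cost: "lam * c + (b2 - b1) \<le> (1 + lam) * \<delta> + (a2 - a1)"
    using \<open>0 \<le> lam\<close> \<open>a1 \<le> a2\<close> L
  proof (cases rule: ldc_step_cases)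
    case left
    with matching_dist_approach_left[OF _ \<open>a1 \<le> a2\<close> r] show thesis
      by (intro that[of "a1 - r"]) (auto simp: algebra_simps)
  next
    case right
    with matching_dist_approach_right[OF \<open>a1 \<le> a2\<close> _ r] show thesis
      by (intro that[of "r - a2"]) (auto simp: algebra_simps)
  next
    case (inside_left u)
    have "lam * u \<le> u" using mult_right_mono[OF \<open>lam \<le> 1\<close> \<open>0 \<le> u\<close>] by simp
    with inside_left \<open>0 \<le> lam\<close> matching_dist_converge[of u "lam * u" a1 r a2 x y] r
    show thesis by (intro that[of "lam * u - u"]) (auto simp: algebra_simps)
  next
    case (inside_right u)
    have "lam * u \<le> u" using mult_right_mono[OF \<open>lam \<le> 1\<close> \<open>0 \<le> u\<close>] by simp
    with inside_right \<open>0 \<le> lam\<close> matching_dist_converge[of "lam * u" u a1 r a2 x y] r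
    show thesis by (intro that[of "lam * u - u"]) (auto simp: algebra_simps)
  qed
  have "(1 + lam) * matching_dist (b1, b2) (x, y)
      \<le> (1 + lam) * (matching_dist (a1, a2) (x, y) - \<delta>)"
    using drop \<open>0 \<le> lam\<close> by (intro mult_left_mono) auto
  with cost show ?thesis by (simp add: algebra_simps)
qed

lemma ldc_cost_le_ftp_cost:
  assumes "0 \<le> lam" "lam \<le> 1"
  shows "\<lbrakk>a1 \<le> a2; f1 \<le> f2; set ps \<subseteq> {1, 2}\<rbrakk> \<Longrightarrow> ldc_cost lam (a1, a2) rs ps
    \<le> (1 + lam) * ftp_cost (f1, f2) rs ps + (1 + lam) * matching_dist (a1, a2) (f1, f2)
       + lam * (a2 - a1)"
proof (induction rs ps arbitrary: a1 a2 f1 f2 rule: list_induct2')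
  case (4 r rs p ps)
  obtain b1 b2 c where L: "ldc_step lam (a1, a2) r p = ((b1, b2), c)" by (metis prod.collapse)
  obtain g1 g2 cf where F: "ftp_step (f1, f2) r p = ((g1, g2), cf)" by (metis prod.collapse)
  have "ldc_cost lam (b1, b2) rs ps
      \<le> (1 + lam) * ftp_cost (g1, g2) rs ps + (1 + lam) * matching_dist (b1, b2) (g1, g2)
         + lam * (b2 - b1)"
    using 4 ldc_step_sorted[OF \<open>0 \<le> lam\<close> \<open>a1 \<le> a2\<close> L] ftp_step_sorted[OF F] by simp
  moreover have "p \<in> {1, 2}" using "4.prems" by simp
  note ldc_step_ftp_potential[OF assms \<open>a1 \<le> a2\<close> \<open>f1 \<le> f2\<close> this L F]
  ultimately show ?case using L F by (simp add: algebra_simps)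
qed (use \<open>0 \<le> lam\<close> in
      \<open>auto intro!: add_nonneg_nonneg mult_nonneg_nonneg simp: matching_dist_nonneg\<close>)

lemma move_cost_nonneg: "move_cost s xs \<ge> 0"
  by (induction s xs rule: move_cost.induct) auto

lemma serves_Nil_iff: "serves [] xs \<longleftrightarrow> xs = []"
  by (simp add: serves_def)

lemma serves_Cons_iff:
  "serves (r # rs) xs \<longleftrightarrow> (\<exists>x y xs'. xs = (x, y) # xs' \<and> (r = x \<or> r = y) \<and> serves rs xs')"
  by (cases xs) (auto simp: serves_def nth_Cons split: nat.splits)

lemma ldc_cost_le_move_cost:
  assumes "0 \<le> lam" "lam \<le> 1"
  shows "\<lbrakk>a1 \<le> a2; serves rs xs\<rbrakk> \<Longrightarrow> lam * ldc_cost lam (a1, a2) rs ps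
    \<le> (1 + lam) * move_cost (x, y) xs + (1 + lam) * matching_dist (a1, a2) (x, y) + (a2 - a1)"
proof (induction rs ps arbitrary: a1 a2 x y xs rule: list_induct2')
  case (4 r rs p ps)
  obtain x' y' xs' where xs: "xs = (x', y') # xs'" and r: "r = x' \<or> r = y'" and "serves rs xs'"
    using "4.prems"(2) by (auto simp: serves_Cons_iff)
  obtain b1 b2 c where L: "ldc_step lam (a1, a2) r p = ((b1, b2), c)" by (metis prod.collapse)
  have "lam * ldc_cost lam (b1, b2) rs ps
      \<le> (1 + lam) * move_cost (x', y') xs' + (1 + lam) * matching_dist (b1, b2) (x', y')
         + (b2 - b1)"
    using 4 ldc_step_sorted[OF \<open>0 \<le> lam\<close> \<open>a1 \<le> a2\<close> L] \<open>serves rs xs'\<close> by simp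
  moreover note ldc_step_offline_potential[OF assms \<open>a1 \<le> a2\<close> r L]
  moreover have "(1 + lam) * matching_dist (a1, a2) (x', y')
      \<le> (1 + lam) * (matching_dist (a1, a2) (x, y) + \<bar>x - x'\<bar> + \<bar>y - y'\<bar>)"
    using \<open>0 \<le> lam\<close> by (intro mult_left_mono matching_dist_move_le) auto
  ultimately show ?case using L xs by (simp add: algebra_simps)
qed (use \<open>0 \<le> lam\<close> in \<open>auto intro!: add_nonneg_nonneg mult_nonneg_nonneg
      simp: matching_dist_nonneg move_cost_nonneg serves_Nil_iff serves_Cons_iff\<close>)

lemma le_affine_opt_cost:
  assumes "k > 0" and "\<And>xs. serves rs xs \<Longrightarrow> A \<le> k * move_cost s xs + C"
  shows "A \<le> k * opt_cost s rs + C"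
proof -
  have "serves rs (map (\<lambda>r. (r, r)) rs)" by (simp add: serves_def)
  then have "(A - C) / k \<le> opt_cost s rs"
    unfolding opt_cost_def using assms by (intro cInf_greatest) (auto simp: field_simps)
  then show ?thesis using \<open>k > 0\<close> by (simp add: field_simps)
qed

lemma ldc_cost_le_opt_cost:
  assumes "0 < lam" "lam \<le> 1" "a1 \<le> a2"
  shows "ldc_cost lam (a1, a2) rs ps \<le> (1 + 1 / lam) * opt_cost (a1, a2) rs + (a2 - a1) / lam"
proof (rule le_affine_opt_cost)
  show "1 + 1 / lam > 0" using \<open>0 < lam\<close> by (simp add: add_pos_pos)
next
  fix xs assume "serves rs xs"
  from ldc_cost_le_move_cost[OF less_imp_le[OF \<open>0 < lam\<close>] \<open>lam \<le> 1\<close> \<open>a1 \<le> a2\<close> this,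
      of ps a1 a2]
  have "lam * ldc_cost lam (a1, a2) rs ps \<le> (1 + lam) * move_cost (a1, a2) xs + (a2 - a1)"
    by (simp add: matching_dist_self)
  then have "ldc_cost lam (a1, a2) rs ps \<le> ((1 + lam) * move_cost (a1, a2) xs + (a2 - a1)) / lam"
    using \<open>0 < lam\<close> by (simp add: pos_le_divide_eq mult.commute)
  also have "\<dots> = (1 + 1 / lam) * move_cost (a1, a2) xs + (a2 - a1) / lam"
    using \<open>0 < lam\<close> by (simp add: field_simps)
  finally show "ldc_cost lam (a1, a2) rs ps \<le> \<dots>" .
qed

lemma ldc_cost_le_ftp_cost_same_start:
  assumes "0 \<le> lam" "lam \<le> 1" "s1 \<le> s2" "set ps \<subseteq> {1, 2}"
  shows "ldc_cost lam (s1, s2) rs ps \<le> (1 + lam) * ftp_cost (s1, s2) rs ps + lam * (s2 - s1)"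
  using ldc_cost_le_ftp_cost[OF assms(1,2,3,3,4)] by (simp add: matching_dist_self)

theorem theorem4:
  fixes lam s1 s2 :: real
  assumes "0 \<le> lam" and "lam \<le> 1" and "s1 \<le> s2"
  shows "\<exists>c \<ge> 0. \<forall>rs ps. length ps = length rs \<longrightarrow> set ps \<subseteq> {1, 2} \<longrightarrow>
           (let opt = opt_cost (s1, s2) rs;
                eta = ftp_cost (s1, s2) rs ps - opt;
                alg = ldc_cost lam (s1, s2) rs ps
            in alg \<le> (1 + lam) * (opt + eta) + c \<and>
               (lam > 0 \<longrightarrow> alg \<le> (1 + 1 / lam) * opt + c))"
proof -
  define c where "c = lam * (s2 - s1) + (if lam > 0 then (s2 - s1) / lam else 0)"
  have c_ge: "lam * (s2 - s1) \<le> c" "lam > 0 \<Longrightarrow> (s2 - s1) / lam \<le> c" and "c \<ge> 0"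
    using assms by (simp_all add: c_def)
  have "ldc_cost lam (s1, s2) rs ps \<le> (1 + lam) * ftp_cost (s1, s2) rs ps + c"
    if "set ps \<subseteq> {1, 2}" for rs ps
    using ldc_cost_le_ftp_cost_same_start[OF assms that, of rs] c_ge(1) by linarith
  moreover have "ldc_cost lam (s1, s2) rs ps \<le> (1 + 1 / lam) * opt_cost (s1, s2) rs + c"
    if "lam > 0" for rs ps
    using ldc_cost_le_opt_cost[OF that assms(2,3), of rs ps] c_ge(2)[OF that] by linarith
  ultimately show ?thesis using \<open>c \<ge> 0\<close> by (intro exI[of _ c]) (auto simp: Let_def)
qed

end
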